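(* Let $\beta=(\pi_1,\pi_2)$ be a chainable pair of patterns which is redundant, and let $\beta'=(\pi_1*\pi_2)$ be the single-pattern architecture. Then (1) $\mathcal{B}^\beta=\Sigma^{\pi_1*\pi_2}=\mathcal{B}^{\beta'}$; (2) $\|\beta'\|_0=\|\pi_1*\pi_2\|_0<\|\pi_1\|_0+\|\pi_2\|_0=\|\beta\|_0$.
   Context: A pattern is a tuple $\pi=(a,b,c,d)$ of positive integers; $\mathbf{S}_\pi:=\mathbf{I}_a\otimes\mathbf{1}_{b\times c}\otimes\mathbf{I}_d\in\{0,1\}^{abd\times acd}$; $\|\pi\|_0:=abcd$. A $\pi$-factor is a complex $abd\times acd$ matrix with support in that of $\mathbf{S}_\pi$; $\Sigma^\pi$ is the set of $\pi$-factors. Patterns $\pi_1=(a_1,b_1,c_1,d_1),\pi_2=(a_2,b_2,c_2,d_2)$ are chainable if $a_1c_1/a_2=b_2d_2/d_1=:r(\pi_1,\pi_2)$ is an integer, $a_1\mid a_2$, $d_2\mid d_1$; then $\pi_1*\pi_2:=(a_1,b_1d_1/d_2,a_2c_2/a_1,d_2)$. The chainable pair is redundant if $r(\pi_1,\pi_2)\ge\min(b_1,c_2)$. For an architecture $\alpha=(\pi_\ell)_{\ell=1}^L$, $\mathcal{B}^\alpha:=\{\mathbf{X}_1\cdots\mathbf{X}_L:\mathbf{X}_\ell\in\Sigma^{\pi_\ell}\}$ and $\|\alpha\|_0:=\sum_\ell\|\pi_\ell\|_0$. *)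

theory Defs
  imports Complex_Main "Jordan_Normal_Form.Matrix"
begin

type_synonym pattern = "nat \<times> nat \<times> nat \<times> nat"

definition pat_pos :: "pattern \<Rightarrow> bool" where
  "pat_pos \<pi> = (case \<pi> of (a,b,c,d) \<Rightarrow> 0 < a \<and> 0 < b \<and> 0 < c \<and> 0 < d)"

definition pat_rows :: "pattern \<Rightarrow> nat" where
  "pat_rows \<pi> = (case \<pi> of (a,b,c,d) \<Rightarrow> a*b*d)"

definition pat_cols :: "pattern \<Rightarrow> nat" where
  "pat_cols \<pi> = (case \<pi> of (a,b,c,d) \<Rightarrow> a*c*d)"

text \<open>Support matrix S_pi = I_a (x) 1_{b x c} (x) I_d, written out entrywise:
  row index i = i1*(b*d) + i2*d + i3 (i1<a, i2<b, i3<d),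
  column index j = j1*(c*d) + j2*d + j3 (j1<a, j2<c, j3<d);
  the entry is 1 iff i1 = j1 and i3 = j3.\<close>
definition supp_mat :: "pattern \<Rightarrow> complex mat" where
  "supp_mat \<pi> = (case \<pi> of (a,b,c,d) \<Rightarrow>
     mat (a*b*d) (a*c*d) (\<lambda>(i,j).
       if i div (b*d) = j div (c*d) \<and> i mod d = j mod d then 1 else 0))"

definition factors :: "pattern \<Rightarrow> complex mat set" where
  "factors \<pi> = {X \<in> carrier_mat (pat_rows \<pi>) (pat_cols \<pi>).
      \<forall>i < pat_rows \<pi>. \<forall>j < pat_cols \<pi>. supp_mat \<pi> $$ (i,j) = 0 \<longrightarrow> X $$ (i,j) = 0}"

definition pat_norm0 :: "pattern \<Rightarrow> nat" where
  "pat_norm0 \<pi> = (case \<pi> of (a,b,c,d) \<Rightarrow> a*b*c*d)"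

definition chainable :: "pattern \<Rightarrow> pattern \<Rightarrow> bool" where
  "chainable \<pi>1 \<pi>2 = (case \<pi>1 of (a1,b1,c1,d1) \<Rightarrow> case \<pi>2 of (a2,b2,c2,d2) \<Rightarrow>
     (real (a1*c1) / real a2 = real (b2*d2) / real d1 \<and> a2 dvd a1*c1)
     \<and> a1 dvd a2 \<and> d2 dvd d1)"

text \<open>r(pi1,pi2) = a1 c1 / a2 (an integer for chainable pairs).\<close>
definition chain_r :: "pattern \<Rightarrow> pattern \<Rightarrow> nat" where
  "chain_r \<pi>1 \<pi>2 = (case \<pi>1 of (a1,b1,c1,d1) \<Rightarrow> case \<pi>2 of (a2,b2,c2,d2) \<Rightarrow> a1*c1 div a2)"

definition pat_star :: "pattern \<Rightarrow> pattern \<Rightarrow> pattern" (infixl "\<star>" 70) where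
  "pat_star \<pi>1 \<pi>2 = (case \<pi>1 of (a1,b1,c1,d1) \<Rightarrow> case \<pi>2 of (a2,b2,c2,d2) \<Rightarrow>
     (a1, b1*d1 div d2, a2*c2 div a1, d2))"

definition redundant :: "pattern \<Rightarrow> pattern \<Rightarrow> bool" where
  "redundant \<pi>1 \<pi>2 = (chainable \<pi>1 \<pi>2 \<and>
     (case \<pi>1 of (a1,b1,c1,d1) \<Rightarrow> case \<pi>2 of (a2,b2,c2,d2) \<Rightarrow>
        chain_r \<pi>1 \<pi>2 \<ge> min b1 c2))"

fun arch_set :: "pattern list \<Rightarrow> complex mat set" where
  "arch_set [] = {}"
| "arch_set [\<pi>] = factors \<pi>"
| "arch_set (\<pi> # \<alpha>) = {X * Y | X Y. X \<in> factors \<pi> \<and> Y \<in> arch_set \<alpha>}"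

definition arch_norm0 :: "pattern list \<Rightarrow> nat" where
  "arch_norm0 \<alpha> = (\<Sum>\<pi>\<leftarrow>\<alpha>. pat_norm0 \<pi>)"

end

theory Submission
  imports Defs
begin

text \<open>Write r for the chaining ratio; then \<pi>1 = (a, b, rq, dp), \<pi>2 = (aq, rp, c, d) and
  \<pi>1 \<star> \<pi>2 = (a, bp, qc, d). Reading row and column indices in mixed radix, a
  (\<pi>1 \<star> \<pi>2)-factor consists of independent b \<times> c blocks, and the product of a
  \<pi>1-factor with a \<pi>2-factor has as its blocks exactly the products of a b \<times> r with an
  r \<times> c matrix. Hence such products are (\<pi>1 \<star> \<pi>2)-factors, and conversely every
  (\<pi>1 \<star> \<pi>2)-factor is one, because when r \<ge> min b c every b \<times> c matrix factors through
  r dimensions by padding an identity. The parameter count drops since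
  apqd \<cdot> bc < apqd \<cdot> (br + rc).\<close>

definition pattern_supp :: "nat \<Rightarrow> nat \<Rightarrow> nat \<Rightarrow> nat \<Rightarrow> nat \<Rightarrow> bool" where
  "pattern_supp b c d i j \<longleftrightarrow> i div (b*d) = j div (c*d) \<and> i mod d = j mod d"

lemma factors_eq:
  "factors (a,b,c,d) = {X \<in> carrier_mat (a*b*d) (a*c*d).
      \<forall>i < a*b*d. \<forall>j < a*c*d. \<not> pattern_supp b c d i j \<longrightarrow> X $$ (i,j) = 0}"
  unfolding factors_def supp_mat_def pat_rows_def pat_cols_def pattern_supp_def by auto

lemma index_mult_mat_sum:
  assumes "A \<in> carrier_mat n m" "B \<in> carrier_mat m l" "i < n" "j < l"
  shows "(A * B) $$ (i,j) = (\<Sum>k<m. A $$ (i,k) * B $$ (k,j))"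
  using assms by (auto simp: scalar_prod_def lessThan_atLeast0 intro!: sum.cong)

lemma mixed_radix_digits:
  fixes x y z r m :: nat
  assumes "y < r" "z < m"
  shows "((x*r+y)*m+z) div (r*m) = x" "((x*r+y)*m+z) div m mod r = y" "((x*r+y)*m+z) mod m = z"
proof -
  have high: "((x*r+y)*m+z) div m = x*r+y" using assms by simp
  then show "((x*r+y)*m+z) div m mod r = y" using assms by simp
  show "((x*r+y)*m+z) mod m = z" using assms by simp
  show "((x*r+y)*m+z) div (r*m) = x" using high assms by (simp add: div_mult2_eq mult.commute)
qed

lemma mixed_radix_decomp: "(k::nat) = (k div (r*m)*r + k div m mod r)*m + k mod m"
  by (simp add: div_mult2_eq mult.commute)

lemma mult_add_less: "(x::nat) < n \<Longrightarrow> y < m \<Longrightarrow> x*m + y < n*m"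
proof -
  assume "x < n" "y < m"
  then have "x*m + y < (x+1)*m" by simp
  also have "\<dots> \<le> n*m" using \<open>x < n\<close> by (intro mult_le_mono1) simp
  finally show ?thesis .
qed

lemma mixed_radix_less:
  fixes x y z n r m :: nat
  assumes "x < n" "y < r" "z < m"
  shows "(x*r+y)*m+z < n*r*m"
  using assms by (intro mult_add_less) auto

lemma sum_mixed_radix_slice:
  fixes h :: "nat \<Rightarrow> 'a::comm_monoid_add"
  assumes "x < n" "z < m"
    and zero: "\<And>k. k < n*r*m \<Longrightarrow> k div (r*m) \<noteq> x \<or> k mod m \<noteq> z \<Longrightarrow> h k = 0"
  shows "(\<Sum>k<n*r*m. h k) = (\<Sum>y<r. h ((x*r+y)*m+z))"
proof -
  define e where "e y = (x*r+y)*m+z" for y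
  have "inj_on e {..<r}"
    by (rule inj_on_inverseI[where g = "\<lambda>k. k div m mod r"]) (use assms in \<open>simp add: e_def mixed_radix_digits\<close>)
  moreover have "e ` {..<r} \<subseteq> {..<n*r*m}"
    using assms by (auto simp: e_def mixed_radix_less)
  moreover have "h k = 0" if "k \<in> {..<n*r*m} - e ` {..<r}" for k
  proof (rule zero)
    show "k < n*r*m" using that by simp
    have "k div m mod r < r" using that by (cases "r = 0") auto
    then show "k div (r*m) \<noteq> x \<or> k mod m \<noteq> z"
      using that mixed_radix_decomp[of k r m] by (auto simp: e_def)
  qed
  ultimately have "(\<Sum>k<n*r*m. h k) = (\<Sum>k\<in>e ` {..<r}. h k)"
    by (intro sum.mono_neutral_right) auto
  also have "\<dots> = (\<Sum>y<r. h (e y))"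
    by (rule sum.reindex_cong[OF \<open>inj_on e {..<r}\<close> refl refl])
  finally show ?thesis by (simp add: e_def)
qed

lemma pattern_supp_chain:
  assumes "pattern_supp b (r*q) (d*p) i k" "pattern_supp (r*p) c d k j"
  shows "pattern_supp (b*p) (q*c) d i j"
proof -
  have ik: "i div (b*(d*p)) = k div (r*q*(d*p))" "i mod (d*p) = k mod (d*p)"
    and kj: "k div (r*p*d) = j div (c*d)" "k mod d = j mod d"
    using assms by (auto simp: pattern_supp_def)
  have "i mod d = k mod d"
    using ik(2) by (metis mod_mod_cancel dvd_triv_left)
  moreover have "i div (b*p*d) = j div (q*c*d)"
  proof -
    have "i div (b*p*d) = k div (r*p*d) div q"
      using ik(1) by (simp add: div_mult2_eq[symmetric] ac_simps)
    also have "\<dots> = j div (q*c*d)"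
      using kj(1) by (simp add: div_mult2_eq[symmetric] ac_simps)
    finally show ?thesis .
  qed
  ultimately show ?thesis using kj(2) by (simp add: pattern_supp_def)
qed

lemma factors_mult_chain:
  assumes "X \<in> factors (a,b,r*q,d*p)" "Y \<in> factors (a*q,r*p,c,d)"
  shows "X * Y \<in> factors (a,b*p,q*c,d)"
proof -
  have X: "X \<in> carrier_mat (a*b*(d*p)) (a*(r*q)*(d*p))"
    and X0: "\<And>i k. i < a*b*(d*p) \<Longrightarrow> k < a*(r*q)*(d*p) \<Longrightarrow>
                \<not> pattern_supp b (r*q) (d*p) i k \<Longrightarrow> X $$ (i,k) = 0"
    using assms(1) by (auto simp: factors_eq)
  have Y: "Y \<in> carrier_mat (a*(r*q)*(d*p)) (a*(q*c)*d)"
    and Y0: "\<And>k j. k < a*(r*q)*(d*p) \<Longrightarrow> j < a*(q*c)*d \<Longrightarrow>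
                \<not> pattern_supp (r*p) c d k j \<Longrightarrow> Y $$ (k,j) = 0"
    using assms(2) by (auto simp: factors_eq ac_simps)
  have "(X*Y) $$ (i,j) = 0"
    if i: "i < a*(b*p)*d" and j: "j < a*(q*c)*d" and off: "\<not> pattern_supp (b*p) (q*c) d i j" for i j
  proof -
    have i': "i < a*b*(d*p)" using i by (simp add: ac_simps)
    have "X $$ (i,k) * Y $$ (k,j) = 0" if "k < a*(r*q)*(d*p)" for k
      using X0[OF i' that] Y0[OF that j] pattern_supp_chain off by fastforce
    then show ?thesis
      unfolding index_mult_mat_sum[OF X Y i' j] by (intro sum.neutral) simp
  qed
  moreover have "X * Y \<in> carrier_mat (a*(b*p)*d) (a*(q*c)*d)"
    using X Y by (auto simp: ac_simps)
  ultimately show ?thesis by (auto simp: factors_eq)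
qed

text \<open>The coefficients F i J t (t < r) form the row of the left b \<times> r block met by row i
  in column group J = j div (c*d), and the G t (i mod (d*p)) j form the column of the right
  r \<times> c block met by column j; every such choice is realized by a \<pi>1-factor and a \<pi>2-factor.\<close>

lemma chain_factors_with_block_product:
  fixes F G :: "nat \<Rightarrow> nat \<Rightarrow> nat \<Rightarrow> complex"
  assumes "0 < d" "0 < p"
  obtains X Y where "X \<in> factors (a,b,r*q,d*p)" "Y \<in> factors (a*q,r*p,c,d)"
    and "\<And>i j. i < a*b*(d*p) \<Longrightarrow> j < a*q*c*d \<Longrightarrow> (X*Y) $$ (i,j) =
      (if pattern_supp (b*p) (q*c) d i j then \<Sum>t<r. F i (j div (c*d)) t * G t (i mod (d*p)) j else 0)"
proof -
  define m where "m = d*p"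
  define X where "X = mat (a*b*m) (a*(r*q)*m) (\<lambda>(i,k).
      if i div (b*m) = k div (r*m) div q \<and> i mod m = k mod m
      then F i (k div (r*m)) (k div m mod r) else 0)"
  define Y where "Y = mat (a*(r*q)*m) (a*q*c*d) (\<lambda>(k,j).
      if k div (r*m) = j div (c*d) \<and> k mod d = j mod d
      then G (k div m mod r) (k mod m) j else 0)"
  have Xc: "X \<in> carrier_mat (a*b*m) (a*(r*q)*m)" and Yc: "Y \<in> carrier_mat (a*(r*q)*m) (a*q*c*d)"
    by (simp_all add: X_def Y_def)
  have "X \<in> factors (a,b,r*q,m)"
    using Xc by (auto simp: factors_eq X_def pattern_supp_def div_mult2_eq[symmetric] ac_simps)
  moreover have "Y \<in> factors (a*q,r*p,c,d)"
    using Yc by (auto simp: factors_eq Y_def pattern_supp_def m_def ac_simps)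
  moreover have "(X*Y) $$ (i,j) =
      (if pattern_supp (b*p) (q*c) d i j then \<Sum>t<r. F i (j div (c*d)) t * G t (i mod m) j else 0)"
    if i: "i < a*b*m" and j: "j < a*q*c*d" for i j
  proof -
    define J where "J = j div (c*d)"
    have J: "J < a*q" using j by (simp add: J_def less_mult_imp_div_less mult.assoc)
    have m: "i mod m < m" using assms by (simp add: m_def)
    have supp: "pattern_supp (b*p) (q*c) d i j \<longleftrightarrow> i div (b*m) = J div q \<and> i mod m mod d = j mod d"
      by (simp add: pattern_supp_def J_def m_def mod_mod_cancel div_mult2_eq ac_simps)
    have "(X*Y) $$ (i,j) = (\<Sum>k<a*q*r*m. X $$ (i,k) * Y $$ (k,j))"
      using index_mult_mat_sum[OF Xc Yc i j] by (simp add: ac_simps)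
    also have "\<dots> = (\<Sum>t<r. X $$ (i,(J*r+t)*m + i mod m) * Y $$ ((J*r+t)*m + i mod m,j))"
    proof (rule sum_mixed_radix_slice[OF J m])
      fix k assume "k < a*q*r*m" "k div (r*m) \<noteq> J \<or> k mod m \<noteq> i mod m"
      then show "X $$ (i,k) * Y $$ (k,j) = 0"
        using i j by (auto simp: X_def Y_def J_def ac_simps)
    qed
    also have "\<dots> = (\<Sum>t<r. if pattern_supp (b*p) (q*c) d i j then F i J t * G t (i mod m) j else 0)"
    proof (rule sum.cong)
      fix t assume "t \<in> {..<r}"
      define k where "k = (J*r+t)*m + i mod m"
      have k: "k div (r*m) = J" "k div m mod r = t" "k mod m = i mod m"
        using \<open>t \<in> {..<r}\<close> m by (simp_all add: k_def mixed_radix_digits)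
      have "k < a*(r*q)*m"
        using J \<open>t \<in> {..<r}\<close> m mixed_radix_less[of J "a*q" t r "i mod m" m]
        by (simp add: k_def ac_simps)
      moreover have "k mod d = i mod m mod d"
        using k(3) by (metis m_def mod_mod_cancel dvd_triv_left)
      ultimately show "X $$ (i,k) * Y $$ (k,j) =
          (if pattern_supp (b*p) (q*c) d i j then F i J t * G t (i mod m) j else 0)"
        using i j k by (auto simp: X_def Y_def supp J_def[symmetric])
    qed simp
    finally show ?thesis by (simp add: J_def)
  qed
  ultimately show ?thesis using that by (simp add: m_def)
qed

lemma exists_block_factorization:
  fixes Z :: "complex mat"
  assumes "min b c \<le> r"
  obtains F G :: "nat \<Rightarrow> nat \<Rightarrow> nat \<Rightarrow> complex" where
    "\<And>i j. i < a*b*(d*p) \<Longrightarrow> j < a*q*c*d \<Longrightarrow> pattern_supp (b*p) (q*c) d i j \<Longrightarrow>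
       (\<Sum>t<r. F i (j div (c*d)) t * G t (i mod (d*p)) j) = Z $$ (i,j)"
proof (cases "b \<le> r")
  case True
  define F :: "nat \<Rightarrow> nat \<Rightarrow> nat \<Rightarrow> complex" where
    "F i J t = (if t = i div (d*p) mod b then 1 else 0)" for i J t
  define G where
    "G t \<mu> j = (if t < b then Z $$ ((j div (c*d) div q * b + t)*(d*p) + \<mu>, j) else 0)" for t \<mu> j
  show ?thesis
  proof (rule that[of F G])
    fix i j assume i: "i < a*b*(d*p)" and "pattern_supp (b*p) (q*c) d i j"
    then have "i div (b*(d*p)) = j div (c*d) div q"
      by (simp add: pattern_supp_def div_mult2_eq[symmetric] ac_simps)
    moreover have "i div (d*p) mod b < b" using i by (intro mod_less_divisor) (cases b; simp)
    ultimately show "(\<Sum>t<r. F i (j div (c*d)) t * G t (i mod (d*p)) j) = Z $$ (i,j)"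
      using True mixed_radix_decomp[of i b "d*p"]
      by (auto simp: F_def G_def if_distrib[of "\<lambda>x. x * _"] sum.delta' cong: if_cong)
  qed
next
  case False
  then have "c \<le> r" using assms by simp
  define F where
    "F i J t = (if t < c then Z $$ (i, (J*c + t)*d + i mod d) else 0)" for i J t
  define G :: "nat \<Rightarrow> nat \<Rightarrow> nat \<Rightarrow> complex" where
    "G t \<mu> j = (if t = j div d mod c then 1 else 0)" for t \<mu> j
  show ?thesis
  proof (rule that[of F G])
    fix i j assume j: "j < a*q*c*d" and "pattern_supp (b*p) (q*c) d i j"
    then have "i mod d = j mod d" by (simp add: pattern_supp_def)
    moreover have "j div d mod c < c" using j by (intro mod_less_divisor) (cases c; simp)
    ultimately show "(\<Sum>t<r. F i (j div (c*d)) t * G t (i mod (d*p)) j) = Z $$ (i,j)"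
      using \<open>c \<le> r\<close> mixed_radix_decomp[of j c d]
      by (auto simp: F_def G_def if_distrib[of "\<lambda>x. _ * x"] sum.delta' cong: if_cong)
  qed
qed

lemma factors_eq_mult_chain:
  assumes "0 < d" "0 < p" "min b c \<le> r"
  shows "factors (a,b*p,q*c,d) =
    {X * Y | X Y. X \<in> factors (a,b,r*q,d*p) \<and> Y \<in> factors (a*q,r*p,c,d)}"
proof
  show "{X * Y | X Y. X \<in> factors (a,b,r*q,d*p) \<and> Y \<in> factors (a*q,r*p,c,d)} \<subseteq> factors (a,b*p,q*c,d)"
    using factors_mult_chain by blast
next
  show "factors (a,b*p,q*c,d) \<subseteq> {X * Y | X Y. X \<in> factors (a,b,r*q,d*p) \<and> Y \<in> factors (a*q,r*p,c,d)}"
  proof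
    fix Z assume "Z \<in> factors (a,b*p,q*c,d)"
    then have Z: "Z \<in> carrier_mat (a*b*(d*p)) (a*q*c*d)"
      and Z0: "\<And>i j. i < a*b*(d*p) \<Longrightarrow> j < a*q*c*d \<Longrightarrow> \<not> pattern_supp (b*p) (q*c) d i j \<Longrightarrow> Z $$ (i,j) = 0"
      by (auto simp: factors_eq ac_simps)
    obtain F G where FG: "\<And>i j. i < a*b*(d*p) \<Longrightarrow> j < a*q*c*d \<Longrightarrow> pattern_supp (b*p) (q*c) d i j \<Longrightarrow>
        (\<Sum>t<r. F i (j div (c*d)) t * G t (i mod (d*p)) j) = Z $$ (i,j)"
      using exists_block_factorization[OF assms(3), where a = a and q = q and d = d and p = p and Z = Z]
      by blast
    obtain X Y where X: "X \<in> factors (a,b,r*q,d*p)" and Y: "Y \<in> factors (a*q,r*p,c,d)"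
      and XY: "\<And>i j. i < a*b*(d*p) \<Longrightarrow> j < a*q*c*d \<Longrightarrow> (X*Y) $$ (i,j) =
        (if pattern_supp (b*p) (q*c) d i j then \<Sum>t<r. F i (j div (c*d)) t * G t (i mod (d*p)) j else 0)"
      using chain_factors_with_block_product[OF assms(1,2), where a = a and b = b and r = r and q = q and c = c
          and F = F and G = G]
      by blast
    have "X * Y \<in> carrier_mat (a*b*(d*p)) (a*q*c*d)"
      using factors_mult_chain[OF X Y] by (auto simp: factors_eq ac_simps)
    then have "Z = X * Y"
    proof (intro eq_matI)
      fix i j assume "i < dim_row (X * Y)" "j < dim_col (X * Y)"
      with \<open>X * Y \<in> carrier_mat _ _\<close> have i: "i < a*b*(d*p)" and j: "j < a*q*c*d" by auto
      show "Z $$ (i,j) = (X * Y) $$ (i,j)"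
        unfolding XY[OF i j] using FG[OF i j] Z0[OF i j] by auto
    qed (use Z in auto)
    then show "Z \<in> {X * Y | X Y. X \<in> factors (a,b,r*q,d*p) \<and> Y \<in> factors (a*q,r*p,c,d)}"
      using X Y by blast
  qed
qed

lemma chainable_patternsE:
  assumes "pat_pos \<pi>1" "pat_pos \<pi>2" "chainable \<pi>1 \<pi>2"
  obtains a b c d p q r where "\<pi>1 = (a, b, r*q, d*p)" "\<pi>2 = (a*q, r*p, c, d)" "chain_r \<pi>1 \<pi>2 = r"
    and "0 < a" "0 < b" "0 < c" "0 < d" "0 < p" "0 < q" "0 < r"
proof -
  obtain a1 b1 c1 d1 a2 b2 c2 d2 where \<pi>: "\<pi>1 = (a1,b1,c1,d1)" "\<pi>2 = (a2,b2,c2,d2)"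
    using prod_cases4 by metis
  have pos: "0 < a1" "0 < b1" "0 < c1" "0 < d1" "0 < a2" "0 < b2" "0 < c2" "0 < d2"
    using assms(1,2) by (auto simp: \<pi> pat_pos_def)
  have ch: "real (a1*c1) / real a2 = real (b2*d2) / real d1" "a2 dvd a1*c1" "a1 dvd a2" "d2 dvd d1"
    using assms(3) by (auto simp: \<pi> chainable_def)
  define r where "r = chain_r \<pi>1 \<pi>2"
  obtain q where q: "a2 = a1*q" using ch(3) by blast
  obtain p where p: "d1 = d2*p" using ch(4) by blast
  have ac: "a1*c1 = r*a2" using ch(2) by (simp add: r_def \<pi> chain_r_def)
  then have c1: "c1 = r*q" using q pos(1) by (simp add: ac_simps)
  have "real (a1*c1) / real a2 = real r" using ac pos(5) by simp
  then have "real (b2*d2) = real (r*d1)" using ch(1) pos(4) by (simp add: field_simps)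
  then have "b2*d2 = r*d1" by (simp only: of_nat_eq_iff)
  then have "b2 = r*p" using p pos(8) by (simp add: ac_simps)
  show ?thesis
  proof (rule that[where a = a1 and b = b1 and c = c2 and d = d2 and p = p and q = q and r = r])
    show "chain_r \<pi>1 \<pi>2 = r" by (simp add: r_def)
  qed (use q p c1 \<open>b2 = r*p\<close> pos in \<open>simp_all add: \<pi>\<close>)
qed

lemma pat_norm0_star_less:
  fixes a b c d p q r :: nat
  assumes "0 < a" "0 < b" "0 < c" "0 < d" "0 < p" "0 < q" "0 < r" "min b c \<le> r"
  shows "pat_norm0 (a,b*p,q*c,d) < pat_norm0 (a,b,r*q,d*p) + pat_norm0 (a*q,r*p,c,d)"
proof -
  have "b*c < b*r + r*c"
  proof (cases "b \<le> r")
    case True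
    then have "b*c \<le> r*c" by simp
    moreover have "0 < b*r" using assms(2,7) by simp
    ultimately show ?thesis by linarith
  next
    case False
    then have "b*c \<le> b*r" using assms(8) by simp
    moreover have "0 < r*c" using assms(3,7) by simp
    ultimately show ?thesis by linarith
  qed
  then have "(a*p*q*d) * (b*c) < (a*p*q*d) * (b*r + r*c)"
    using assms by simp
  then show ?thesis by (simp add: pat_norm0_def algebra_simps)
qed

theorem lemma4p14:
  fixes \<pi>1 \<pi>2 :: pattern
  assumes "pat_pos \<pi>1" and "pat_pos \<pi>2"
    and "chainable \<pi>1 \<pi>2"
    and "redundant \<pi>1 \<pi>2"
  shows "arch_set [\<pi>1, \<pi>2] = factors (\<pi>1 \<star> \<pi>2) \<and> factors (\<pi>1 \<star> \<pi>2) = arch_set [\<pi>1 \<star> \<pi>2]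
         \<and> arch_norm0 [\<pi>1 \<star> \<pi>2] = pat_norm0 (\<pi>1 \<star> \<pi>2)
         \<and> pat_norm0 (\<pi>1 \<star> \<pi>2) < pat_norm0 \<pi>1 + pat_norm0 \<pi>2
         \<and> pat_norm0 \<pi>1 + pat_norm0 \<pi>2 = arch_norm0 [\<pi>1, \<pi>2]"
proof -
  obtain a b c d p q r where \<pi>: "\<pi>1 = (a, b, r*q, d*p)" "\<pi>2 = (a*q, r*p, c, d)"
    and r: "chain_r \<pi>1 \<pi>2 = r" and pos: "0 < a" "0 < b" "0 < c" "0 < d" "0 < p" "0 < q" "0 < r"
    by (rule chainable_patternsE[OF assms(1-3)])
  have "min b c \<le> chain_r \<pi>1 \<pi>2"
    using assms(4) by (simp add: redundant_def \<pi>)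
  then have red: "min b c \<le> r" by (simp only: r)
  have star: "\<pi>1 \<star> \<pi>2 = (a, b*p, q*c, d)"
    using pos by (simp add: \<pi> pat_star_def ac_simps)
  have "arch_set [\<pi>1, \<pi>2] = factors (\<pi>1 \<star> \<pi>2)"
    using factors_eq_mult_chain[OF pos(4,5) red] unfolding star by (simp add: \<pi>)
  moreover have "pat_norm0 (\<pi>1 \<star> \<pi>2) < pat_norm0 \<pi>1 + pat_norm0 \<pi>2"
    using pat_norm0_star_less[OF pos red] unfolding star by (simp add: \<pi>)
  ultimately show ?thesis by (simp add: arch_norm0_def)
qed

end
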